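(* For every integer $k\ge1$, with $r_k$, $C_{\mathrm{Td}}$, $C_\sigma$, $C_\chi$ as below, one has \[ \frac{C_{\mathrm{Td}}}{C_\sigma+C_\chi}>4^k,\qquad \frac{C_\sigma}{C_\chi}\ge 3^k . \] Here $r_k$ is defined by $\binom{4k}{2k}B_k^2\,r_k=B_{2k}$, and $C_{\mathrm{Td}}=2^{4k+1}\big[(2^{4k-1}-1)(1-r_k)+(3-2^{2k+1})\big]$, $C_\sigma=1+r_k$, $C_\chi=2^{4k+1}(2^{2k}-1)^2\frac{B_{2k}}{(4k)!}$.
   Context: $B_m$ denotes the $m$-th Bernoulli number without sign, $B_m = \frac{(2m)!\,\zeta(2m)}{2^{2m-1}\pi^{2m}}$ (so $B_1=1/6$, $B_2=1/30$), where $\zeta$ is the Riemann zeta function. *)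

theory Defs
  imports Complex_Main
begin

definition zeta_nat :: "nat \<Rightarrow> real" where
  "zeta_nat s = (\<Sum>n. 1 / (real (Suc n)) ^ s)"

text \<open>Unsigned Bernoulli number B_m (B_1 = 1/6, B_2 = 1/30), as in the paper.\<close>
definition bern :: "nat \<Rightarrow> real" where
  "bern m = fact (2*m) * zeta_nat (2*m) / (2 ^ (2*m - 1) * pi ^ (2*m))"

definition r_k :: "nat \<Rightarrow> real" where
  "r_k k = bern (2*k) / (real ((4*k) choose (2*k)) * (bern k)^2)"

definition C_Td :: "nat \<Rightarrow> real" where
  "C_Td k = 2 ^ (4*k+1) * ((2 ^ (4*k-1) - 1) * (1 - r_k k) + (3 - 2 ^ (2*k+1)))"

definition C_sigma :: "nat \<Rightarrow> real" where
  "C_sigma k = 1 + r_k k"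

definition C_chi :: "nat \<Rightarrow> real" where
  "C_chi k = 2 ^ (4*k+1) * (2 ^ (2*k) - 1)^2 * bern (2*k) / fact (4*k)"

end

theory Submission
  imports Defs "HOL-Analysis.Analysis" "HOL-Real_Asymp.Real_Asymp"
begin

text \<open>
  By Euler's formula \<open>B\<^sub>m = 2 (2m)! \<zeta>(2m) / (2\<pi>)\<^sup>2\<^sup>m\<close>, everything is an expression in
  \<open>u = 4\<^sup>k\<close>, \<open>\<zeta>(2k)\<close> and \<open>\<zeta>(4k)\<close>: \<open>r\<^sub>k = \<zeta>(4k) / (2 \<zeta>(2k)\<^sup>2) \<le> 1/2\<close> and
  \<open>C\<^sub>\<chi> = 4 (u - 1)\<^sup>2 \<zeta>(4k) / \<pi>\<^sup>4\<^sup>k\<close>. For \<open>k \<ge> 2\<close> this gives \<open>3\<^sup>k C\<^sub>\<chi> \<le> 4 \<zeta>(4) (48/\<pi>\<^sup>4)\<^sup>2 < 1.1\<close>,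
  while \<open>1 + r\<^sub>k > 1.4\<close>; hence \<open>C\<^sub>\<sigma> + C\<^sub>\<chi> \<le> 2\<close>, whereas \<open>C\<^sub>T\<^sub>d\<close> grows like \<open>u\<^sup>4\<close>.
  For \<open>k = 1\<close> the second inequality is an equality, so \<open>\<zeta>(4) \<le> \<pi>\<^sup>4/90\<close> is needed exactly;
  it follows by comparing the sine product formula with Weierstrass' product inequality
  \<open>\<Prod>(1 - b\<^sub>i) \<ge> 1 - \<Sum>b\<^sub>i\<close> and letting \<open>x \<rightarrow> 0\<close>.
\<close>

lemma prod_one_minus_ge_one_minus_sum:
  fixes b :: "'a \<Rightarrow> 'b::linordered_idom"
  assumes "finite A" and "\<And>i. i \<in> A \<Longrightarrow> 0 \<le> b i \<and> b i \<le> 1"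
  shows "1 - sum b A \<le> (\<Prod>i\<in>A. 1 - b i)"
  using assms
proof (induction A rule: finite_induct)
  case (insert j A)
  define P where "P = (\<Prod>i\<in>A. 1 - b i)"
  have b: "0 \<le> b j" "b j \<le> 1" using insert.prems by auto
  have "P \<le> 1" unfolding P_def using insert.prems by (intro prod_le_1) auto
  then have "P * b j \<le> b j" using mult_right_mono[of P 1 "b j"] b by simp
  moreover have "1 - sum b A \<le> P" unfolding P_def using insert by auto
  ultimately show ?case using insert.hyps by (simp add: P_def[symmetric] algebra_simps)
qed simp

lemma sums_square:
  fixes a :: "nat \<Rightarrow> 'a::real_normed_field"
  assumes "a sums s"
  shows "(\<lambda>n. a n ^ 2 + 2 * a n * (\<Sum>k<n. a k)) sums s ^ 2"
proof -
  have "(\<Sum>n<N. a n ^ 2 + 2 * a n * (\<Sum>k<n. a k)) = (\<Sum>n<N. a n) ^ 2" for N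
    by (induction N) (simp_all add: power2_eq_square algebra_simps)
  then show ?thesis
    using tendsto_power[OF assms[unfolded sums_def], of 2] by (simp add: sums_def)
qed

lemma summable_inverse_Suc_power:
  assumes "2 \<le> s"
  shows "summable (\<lambda>n. 1 / real (Suc n) ^ s)"
proof -
  have "summable (\<lambda>n. inverse (real n ^ s))"
    using assms by (intro inverse_power_summable) auto
  then have "summable (\<lambda>n. inverse (real (Suc n) ^ s))"
    by (subst summable_Suc_iff)
  then show ?thesis by (simp add: inverse_eq_divide)
qed

lemma zeta_nat_ge_1:
  assumes "2 \<le> s"
  shows "1 \<le> zeta_nat s"
proof -
  have "(\<Sum>n<1. 1 / real (Suc n) ^ s) \<le> zeta_nat s"
    unfolding zeta_nat_def by (rule sum_le_suminf[OF summable_inverse_Suc_power[OF assms]]) auto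
  then show ?thesis by simp
qed

lemma zeta_nat_antimono:
  assumes "2 \<le> s" "s \<le> t"
  shows "zeta_nat t \<le> zeta_nat s"
  unfolding zeta_nat_def
proof (rule suminf_le[OF _ summable_inverse_Suc_power summable_inverse_Suc_power])
  fix n :: nat
  have "real (Suc n) ^ s \<le> real (Suc n) ^ t" using assms by (intro power_increasing) auto
  then show "1 / real (Suc n) ^ t \<le> 1 / real (Suc n) ^ s"
    by (intro divide_left_mono) auto
qed (use assms in auto)

lemma inverse_Suc_squares_sums: "(\<lambda>n. 1 / real (Suc n) ^ 2) sums (pi^2/6)"
  using inverse_squares_sums by (simp add: add.commute)

lemma zeta_nat_2: "zeta_nat 2 = pi^2/6"
  using inverse_Suc_squares_sums unfolding zeta_nat_def by (simp add: sums_iff)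

text \<open>
  Telescoping the sine product gives \<open>1 - sin(\<pi>x)/(\<pi>x) = \<Sum> x\<^sup>2 a\<^sub>n P\<^sub>n(x)\<close>; bounding \<open>P\<^sub>n(x)\<close>
  below by Weierstrass' inequality produces the cross terms \<open>\<Sum>\<^sub>n a\<^sub>n \<Sum>\<^sub>k\<^sub><\<^sub>n a\<^sub>k\<close>, which equal
  \<open>(\<zeta>(2)\<^sup>2 - \<zeta>(4))/2\<close> by \<open>sums_square\<close>.
\<close>
lemma one_minus_sinc_lower_bound:
  fixes x :: real
  assumes "x \<noteq> 0" "\<bar>x\<bar> \<le> 1"
  shows "x^2 * (pi^2/6) - x^4 / 2 * ((pi^2/6)^2 - zeta_nat 4) \<le> 1 - sin (pi*x) / (pi*x)"
proof -
  define a where "a n = 1 / real (Suc n) ^ 2" for n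
  define P where "P n = (\<Prod>k=1..n. 1 - x^2 / real k ^ 2)" for n
  have "(\<lambda>n. P n - P (Suc n)) sums (P 0 - sin (pi*x) / (pi*x))"
    unfolding P_def using assms by (intro telescope_sums' sin_product_formula_real')
  also have "(\<lambda>n. P n - P (Suc n)) = (\<lambda>n. x^2 * a n * P n)"
    unfolding P_def a_def by (simp add: prod.nat_ivl_Suc' algebra_simps)
  finally have product_sums: "(\<lambda>n. x^2 * a n * P n) sums (1 - sin (pi*x) / (pi*x))"
    by (simp add: P_def)
  have a_sums: "a sums (pi^2/6)" unfolding a_def by (rule inverse_Suc_squares_sums)
  have "(\<lambda>n. a n ^ 2) sums zeta_nat 4"
    using summable_sums[OF summable_inverse_Suc_power[of 4]]
    by (simp add: a_def zeta_nat_def power_divide flip: power_mult)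
  then have lower_sums: "(\<lambda>n. x^2 * a n - x^4 / 2 * ((a n ^ 2 + 2 * a n * (\<Sum>k<n. a k)) - a n ^ 2))
      sums (x^2 * (pi^2/6) - x^4 / 2 * ((pi^2/6)^2 - zeta_nat 4))"
    by (intro sums_diff sums_mult sums_square a_sums)
  show ?thesis
  proof (rule sums_le[OF _ lower_sums product_sums])
    fix n
    have "1 - (\<Sum>k=1..n. x^2 / real k ^ 2) \<le> P n"
      unfolding P_def
    proof (rule prod_one_minus_ge_one_minus_sum)
      fix k assume "k \<in> {1..n}"
      moreover have "x^2 \<le> 1" using assms by (simp add: abs_square_le_1)
      ultimately show "0 \<le> x^2 / real k ^ 2 \<and> x^2 / real k ^ 2 \<le> 1"
        by (auto simp: field_simps intro: order_trans[of _ 1])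
    qed simp
    also have "(\<Sum>k=1..n. x^2 / real k ^ 2) = x^2 * (\<Sum>k<n. a k)"
      unfolding a_def sum_distrib_left by (subst sum_bounds_lt_plus1[symmetric]) simp
    finally have "x^2 * a n * (1 - x^2 * (\<Sum>k<n. a k)) \<le> x^2 * a n * P n"
      by (intro mult_left_mono) (auto simp: a_def)
    then show "x^2 * a n - x^4 / 2 * ((a n ^ 2 + 2 * a n * (\<Sum>k<n. a k)) - a n ^ 2) \<le> x^2 * a n * P n"
      by (simp add: algebra_simps power4_eq_xxxx power2_eq_square)
  qed
qed

lemma zeta_nat_4_le: "zeta_nat 4 \<le> pi^4 / 90"
proof -
  define D where "D = ((pi^2/6)^2 - zeta_nat 4) / 2"
  have "(y^2/6 - 1 + sin y / y) / y^4 \<le> D / pi^4" if "0 < y" "y < pi" for y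
  proof -
    have "(y/pi)^2 * (pi^2/6) - (y/pi)^4 * D \<le> 1 - sin y / y"
      using one_minus_sinc_lower_bound[of "y/pi"] that by (simp add: D_def)
    then show ?thesis using that by (simp add: field_simps power_divide)
  qed
  then have "eventually (\<lambda>y. (y^2/6 - 1 + sin y / y) / y^4 \<le> D / pi^4) (at_right 0)"
    unfolding eventually_at_right_field using pi_gt_zero by blast
  moreover have "((\<lambda>y::real. (y^2/6 - 1 + sin y / y) / y^4) \<longlongrightarrow> 1/120) (at_right 0)"
    by real_asymp
  ultimately have "1/120 \<le> D / pi^4"
    by (intro tendsto_le[OF _ tendsto_const]) auto
  then show ?thesis by (simp add: D_def field_simps power2_eq_square power4_eq_xxxx)
qed

lemma bern_eq_zeta_nat:
  assumes "m \<ge> 1"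
  shows "bern m = 2 * fact (2*m) * zeta_nat (2*m) / (2*pi) ^ (2*m)"
proof -
  have pow: "(2::real) ^ (2*m - 1) = 2 ^ (2*m) / 2"
    using assms by (simp add: power_diff)
  show ?thesis unfolding bern_def power_mult_distrib pow by simp
qed

lemma r_k_eq_zeta_nat:
  assumes "k \<ge> 1"
  shows "r_k k = zeta_nat (4*k) / (2 * zeta_nat (2*k) ^ 2)"
proof -
  have z: "zeta_nat (2*k) \<ge> 1" using assms by (intro zeta_nat_ge_1) auto
  have binom: "real ((4*k) choose (2*k)) = fact (2*(2*k)) / (fact (2*k))^2"
    by (subst binomial_fact) (auto simp: power2_eq_square mult_2[symmetric])
  have pow: "(2*pi) ^ (2*(2*k)) = ((2*pi) ^ (2*k))^2"
    by (simp only: power_mult[symmetric] mult.commute)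
  have bern2: "bern (2*k) = 2 * fact (2*(2*k)) * zeta_nat (4*k) / (2*pi) ^ (2*(2*k))"
    using assms bern_eq_zeta_nat[of "2*k"] by simp
  have bern1: "bern k = 2 * fact (2*k) * zeta_nat (2*k) / (2*pi) ^ (2*k)"
    using assms by (rule bern_eq_zeta_nat)
  show ?thesis
    unfolding r_k_def bern2 bern1 binom pow using z by (simp add: field_simps power2_eq_square)
qed

lemma C_chi_eq_zeta_nat:
  assumes "k \<ge> 1"
  shows "C_chi k = 4 * (4^k - 1)^2 * zeta_nat (4*k) / (pi^4)^k"
proof -
  have four: "(2::real) ^ (2*k) = 4^k" by (simp add: power_mult)
  have pow: "(2*pi) ^ (2*(2*k)) = 2 ^ (4*k) * (pi^4)^k"
    by (simp add: power_mult_distrib flip: power_mult)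
  have bern2: "bern (2*k) = 2 * fact (4*k) * zeta_nat (4*k) / (2 ^ (4*k) * (pi^4)^k)"
    using assms bern_eq_zeta_nat[of "2*k"] unfolding pow by simp
  show ?thesis unfolding C_chi_def bern2 four by (simp add: field_simps)
qed

lemma C_Td_eq_power_4:
  assumes "k \<ge> 1"
  shows "C_Td k = 2 * (4^k)^2 * (((4^k)^2 / 2 - 1) * (1 - r_k k) + (3 - 2 * 4^k))"
proof -
  have four: "(2::real) ^ (2*k) = 4^k" by (simp add: power_mult)
  have "(2::real) ^ (4*k) = (2 ^ (2*k))^2" by (simp flip: power_mult)
  then have sixteen: "(2::real) ^ (4*k) = (4^k)^2" unfolding four .
  have half: "(2::real) ^ (4*k - 1) = (4^k)^2 / 2"
    using assms by (simp add: power_diff flip: sixteen)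
  show ?thesis unfolding C_Td_def half power_add power_one_right sixteen four by simp
qed

lemma r_k_pos:
  assumes "k \<ge> 1"
  shows "0 < r_k k"
  using assms zeta_nat_ge_1[of "4*k"] zeta_nat_ge_1[of "2*k"]
  unfolding r_k_eq_zeta_nat[OF assms] by simp

lemma r_k_le_half:
  assumes "k \<ge> 1"
  shows "r_k k \<le> 1/2"
proof -
  have "zeta_nat (4*k) \<le> zeta_nat (2*k)" using assms by (intro zeta_nat_antimono) auto
  also have "\<dots> \<le> zeta_nat (2*k) ^ 2"
    using assms zeta_nat_ge_1[of "2*k"] by (simp add: power2_eq_square)
  finally show ?thesis
    using assms zeta_nat_ge_1[of "2*k"] unfolding r_k_eq_zeta_nat[OF assms] by simp
qed

lemma C_chi_pos:
  assumes "k \<ge> 1"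
  shows "0 < C_chi k"
proof -
  have "0 < (4::real)^k - 1" using assms by (simp add: one_less_power)
  then have "0 < ((4::real)^k - 1)^2" by (rule zero_less_power)
  then show ?thesis
    using assms zeta_nat_ge_1[of "4*k"] unfolding C_chi_eq_zeta_nat[OF assms]
    by (intro divide_pos_pos mult_pos_pos) auto
qed

lemma pi_pow_4_bounds: "97 < pi^4" "pi^4 < 98"
proof -
  have "3.1384 \<le> pi" by (rule order_trans[OF _ pi_approx(1)]) simp
  then have "3.1384^4 \<le> pi^4" by (rule power_mono) simp
  moreover have "(97::real) < 3.1384^4" by (simp add: power_divide)
  ultimately show "97 < pi^4" by linarith
  have "pi \<le> 3.1416" by (rule order_trans[OF pi_approx(2)]) simp
  then have "pi^4 \<le> 3.1416^4" by (rule power_mono) simp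
  moreover have "(3.1416::real)^4 < 98" by (simp add: power_divide)
  ultimately show "pi^4 < 98" by linarith
qed

lemma zeta_nat_4_lt: "zeta_nat 4 < 1.1"
  using zeta_nat_4_le pi_pow_4_bounds by simp

lemma r_k_1: "r_k 1 = 18 * zeta_nat 4 / pi^4"
proof -
  have "r_k 1 = zeta_nat 4 / (2 * zeta_nat 2 ^ 2)" using r_k_eq_zeta_nat[of 1] by simp
  then show ?thesis unfolding zeta_nat_2 by (simp add: field_simps power2_eq_square power4_eq_xxxx)
qed

lemma C_chi_1: "C_chi 1 = 36 * zeta_nat 4 / pi^4"
  by (simp add: C_chi_eq_zeta_nat)

lemma r_k_gt_two_fifths:
  assumes "k \<ge> 2"
  shows "2/5 < r_k k"
proof -
  have k: "k \<ge> 1" using assms by simp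
  have z2: "1 \<le> zeta_nat (2*k)" "zeta_nat (2*k) < 1.1"
    using assms zeta_nat_ge_1[of "2*k"] zeta_nat_antimono[of 4 "2*k"] zeta_nat_4_lt by auto
  then have "zeta_nat (2*k) ^ 2 < 1.1^2" by (intro power_strict_mono) auto
  moreover have "1 \<le> zeta_nat (4*k)" using assms by (intro zeta_nat_ge_1) auto
  ultimately show ?thesis
    using z2 unfolding r_k_eq_zeta_nat[OF k] by (simp add: field_simps)
qed

lemma three_pow_mul_C_chi_lt:
  assumes "k \<ge> 2"
  shows "3^k * C_chi k < 11/10"
proof -
  have k: "k \<ge> 1" using assms by simp
  have "((4::real)^k - 1)^2 \<le> (4^k)^2" using k by (intro power_mono) auto
  also have "\<dots> = 16^k" by (simp add: power2_eq_square power_mult_distrib[symmetric])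
  finally have "((4::real)^k - 1)^2 \<le> 16^k" .
  moreover have "zeta_nat (4*k) \<le> zeta_nat 4" using k by (intro zeta_nat_antimono) auto
  ultimately have "C_chi k \<le> 4 * 16^k * zeta_nat 4 / (pi^4)^k"
    unfolding C_chi_eq_zeta_nat[OF k]
    using zeta_nat_ge_1[of "4*k"] k by (intro divide_right_mono mult_mono mult_left_mono) auto
  then have "3^k * C_chi k \<le> 3^k * (4 * 16^k * zeta_nat 4 / (pi^4)^k)"
    by (rule mult_left_mono) simp
  also have "\<dots> = 4 * zeta_nat 4 * (48 / pi^4)^k"
    by (simp add: power_divide power_mult_distrib[symmetric])
  also have "(48 / pi^4)^k \<le> (48 / pi^4)^2"
    using assms pi_pow_4_bounds by (intro power_decreasing) auto
  also have "\<dots> \<le> (48 / 97)^2"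
    using pi_pow_4_bounds by (intro power_mono frac_le) auto
  finally show ?thesis
    using zeta_nat_4_lt zeta_nat_ge_1[of 4] by (simp add: power_divide)
qed

lemma three_pow_mul_C_chi_le_C_sigma:
  assumes "k \<ge> 1"
  shows "3^k * C_chi k \<le> C_sigma k"
proof (cases "k = 1")
  case True
  show ?thesis
    unfolding True C_sigma_def r_k_1 C_chi_1 using zeta_nat_4_le by (simp add: field_simps)
next
  case False
  then have k2: "k \<ge> 2" using assms by simp
  show ?thesis
    using three_pow_mul_C_chi_lt[OF k2] r_k_gt_two_fifths[OF k2] by (simp add: C_sigma_def)
qed

lemma C_sigma_add_C_chi_le_2:
  assumes "k \<ge> 1"
  shows "C_sigma k + C_chi k \<le> 2"
proof -
  have "(3::real) \<le> 3^k" using power_increasing[of 1 k "3::real"] assms by simp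
  then have "3 * C_chi k \<le> 3^k * C_chi k"
    using C_chi_pos[OF assms] by (intro mult_right_mono) auto
  then have "3 * C_chi k \<le> C_sigma k"
    using three_pow_mul_C_chi_le_C_sigma[OF assms] by simp
  then show ?thesis using r_k_le_half[OF assms] by (simp add: C_sigma_def)
qed

lemma C_Td_gt:
  assumes "k \<ge> 1"
  shows "2 * 4^k < C_Td k"
proof (cases "k = 1")
  case True
  have Td: "C_Td 1 = 32 * (7 * (1 - r_k 1) - 5)" using C_Td_eq_power_4[of 1] by simp
  show ?thesis
    unfolding True Td r_k_1 using zeta_nat_4_le zeta_nat_ge_1[of 4] by (simp add: field_simps)
next
  case False
  define u :: real where "u = 4^k"
  have u: "16 \<le> u"
    using False assms power_increasing[of 2 k "4::real"] unfolding u_def by simp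
  have uu: "16 * u \<le> u^2" using u by (simp add: power2_eq_square mult_right_mono)
  have "(u^2/2 - 1) / 2 \<le> (u^2/2 - 1) * (1 - r_k k)"
    using uu u r_k_le_half[OF assms] mult_left_mono[of "1/2" "1 - r_k k" "u^2/2 - 1"] by simp
  then have "1 \<le> (u^2/2 - 1) * (1 - r_k k) + (3 - 2 * u)" using uu u by (simp add: field_simps)
  then have "2 * u^2 \<le> C_Td k"
    unfolding C_Td_eq_power_4[OF assms] u_def[symmetric]
    using mult_left_mono[of 1 _ "2 * u^2"] by simp
  moreover have "2 * u < 2 * u^2" using u by (simp add: power2_eq_square)
  ultimately show ?thesis unfolding u_def by simp
qed

theorem corollary1:
  fixes k :: nat
  assumes "k \<ge> 1"
  shows "C_Td k / (C_sigma k + C_chi k) > 4 ^ k \<and> C_sigma k / C_chi k \<ge> 3 ^ k"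
proof
  have chi: "0 < C_chi k" by (rule C_chi_pos[OF assms])
  have sum_pos: "0 < C_sigma k + C_chi k" using chi r_k_pos[OF assms] by (simp add: C_sigma_def)
  have "4^k * (C_sigma k + C_chi k) \<le> 2 * 4^k"
    using C_sigma_add_C_chi_le_2[OF assms] by simp
  also have "\<dots> < C_Td k" by (rule C_Td_gt[OF assms])
  finally show "C_Td k / (C_sigma k + C_chi k) > 4 ^ k"
    unfolding pos_less_divide_eq[OF sum_pos] .
  show "C_sigma k / C_chi k \<ge> 3 ^ k"
    unfolding pos_le_divide_eq[OF chi] by (rule three_pow_mul_C_chi_le_C_sigma[OF assms])
qed

end
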